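(* Let $\mathcal{L}=(S,\Sigma,\to)$ be a pLTS in which every relevant distribution has finite support, and let $\mathcal{L}'$ be its associated standard LTS, with bisimilarity approximants $\sim'_m$. Then for every $n\in\mathbb{N}$: (i) for relevant distributions $d_1,d_2$: $d_1,d_2$ are $\sim_n$-equivalent (where $\sim_n$ is the approximant in $\mathcal{L}$) if and only if $d_1\sim'_{3n+2}d_2$ in $\mathcal{L}'$; (ii) for relevant sets $T_1,T_2$: $T_1,T_2$ are $\sim_n$-similar if and only if $T_1\sim'_{3n+1}T_2$ in $\mathcal{L}'$.
   Context: For a countable set $A$, a probability distribution on $A$ is a function $d\colon A\to[0,1]\cap\mathbb{Q}$ with $\sum_{a\in A}d(a)=1$; $\mathrm{supp}(d)=\{a\mid d(a)>0\}$; $\mathcal{D}(A)$ is the set of distributions; $d(B)=\sum_{a\in B}d(a)$; $d$ is Dirac if $d(a)=1$ for some $a$. A pLTS is $\mathcal{L}=(S,\Sigma,\to)$ with $S$ finite or countable, $\Sigma$ finite, $\to\subseteq S\times\Sigma\times\mathcal{D}(S)$ image-finite; write $s\xrightarrow{a}d$. A standard LTS is a pLTS whose distributions are all Dirac. For an equivalence $R$ on $S$, $d,d'$ are $R$-equivalent if $d(E)=d'(E)$ for every $R$-class $E$; subsets $T_1,T_2\subseteq S$ are $R$-similar if they intersect exactly the same $R$-classes. Approximants: $s\sim_0t$ always; $s\sim_{n+1}t$ iff every $s\xrightarrow{a}d$ is matched by some $t\xrightarrow{a}d'$ with $d,d'$ $\sim_n$-equivalent and vice versa. Associated LTS: $d$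 is relevant if $s\xrightarrow{a}d$ for some $s,a$; a nonempty $T\subseteq S$ is relevant if $T\subseteq\mathrm{supp}(d)$ for some relevant $d$; $\rho$ is relevant if $\rho=d(T)$ for relevant $d$ and nonempty $T\subseteq\mathrm{supp}(d)$. $\mathcal{L}'=(S',\Sigma',\Rightarrow)$ has states: $S$ plus relevant distributions plus relevant sets (disjoint union); actions: $\Sigma$ plus relevant numbers plus $\{\#\}$ (disjoint union); transitions: $s\overset{a}{\Rightarrow}d$ iff $s\xrightarrow{a}d$; $d\overset{\rho}{\Rightarrow}T$ iff $d,\rho$ relevant, $T\subseteq\mathrm{supp}(d)$, $d(T)\ge\rho$; $T\overset{\#}{\Rightarrow}s$ iff $T$ relevant and $s\in T$. *)

theory Defs
  imports "HOL-Analysis.Infinite_Sum"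
begin

type_synonym 's dist = "'s \<Rightarrow> rat"

definition supp :: "'s dist \<Rightarrow> 's set" where
  "supp d = {x. d x > 0}"

definition mass :: "'s dist \<Rightarrow> 's set \<Rightarrow> real" where
  "mass d B = infsum (\<lambda>x. real_of_rat (d x)) B"

definition is_dist :: "'s set \<Rightarrow> 's dist \<Rightarrow> bool" where
  "is_dist A d \<longleftrightarrow> (\<forall>x. 0 \<le> d x \<and> d x \<le> 1) \<and> (\<forall>x. x \<notin> A \<longrightarrow> d x = 0)
     \<and> ((\<lambda>x. real_of_rat (d x)) has_sum 1) A"

type_synonym ('s,'a) ptrans = "('s \<times> 'a \<times> 's dist) set"

definition is_pLTS :: "'s set \<Rightarrow> 'a set \<Rightarrow> ('s,'a) ptrans \<Rightarrow> bool" where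
  "is_pLTS S Sig tr \<longleftrightarrow> countable S \<and> finite Sig \<and>
     (\<forall>s a d. (s,a,d) \<in> tr \<longrightarrow> s \<in> S \<and> a \<in> Sig \<and> is_dist S d) \<and>
     (\<forall>s a. finite {d. (s,a,d) \<in> tr})"

definition dist_equiv :: "'s set \<Rightarrow> ('s \<times> 's) set \<Rightarrow> 's dist \<Rightarrow> 's dist \<Rightarrow> bool" where
  "dist_equiv S R d d' \<longleftrightarrow> (\<forall>E \<in> S // R. mass d E = mass d' E)"

definition set_similar :: "'s set \<Rightarrow> ('s \<times> 's) set \<Rightarrow> 's set \<Rightarrow> 's set \<Rightarrow> bool" where
  "set_similar S R T1 T2 \<longleftrightarrow> (\<forall>E \<in> S // R. (E \<inter> T1 \<noteq> {}) = (E \<inter> T2 \<noteq> {}))"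

fun papprox :: "'s set \<Rightarrow> ('s,'a) ptrans \<Rightarrow> nat \<Rightarrow> ('s \<times> 's) set" where
  "papprox S tr 0 = S \<times> S"
| "papprox S tr (Suc n) = {(s,t) \<in> S \<times> S.
     (\<forall>a d. (s,a,d) \<in> tr \<longrightarrow> (\<exists>d'. (t,a,d') \<in> tr \<and> dist_equiv S (papprox S tr n) d d')) \<and>
     (\<forall>a d'. (t,a,d') \<in> tr \<longrightarrow> (\<exists>d. (s,a,d) \<in> tr \<and> dist_equiv S (papprox S tr n) d d'))}"

fun lapprox :: "'q set \<Rightarrow> ('q \<times> 'b \<times> 'q) set \<Rightarrow> nat \<Rightarrow> ('q \<times> 'q) set" where
  "lapprox Q tr 0 = Q \<times> Q"
| "lapprox Q tr (Suc n) = {(s,t) \<in> Q \<times> Q.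
     (\<forall>a s'. (s,a,s') \<in> tr \<longrightarrow> (\<exists>t'. (t,a,t') \<in> tr \<and> (s',t') \<in> lapprox Q tr n)) \<and>
     (\<forall>a t'. (t,a,t') \<in> tr \<longrightarrow> (\<exists>s'. (s,a,s') \<in> tr \<and> (s',t') \<in> lapprox Q tr n))}"

definition relevant_dist :: "('s,'a) ptrans \<Rightarrow> 's dist \<Rightarrow> bool" where
  "relevant_dist tr d \<longleftrightarrow> (\<exists>s a. (s,a,d) \<in> tr)"

definition relevant_set :: "('s,'a) ptrans \<Rightarrow> 's set \<Rightarrow> bool" where
  "relevant_set tr T \<longleftrightarrow> T \<noteq> {} \<and> (\<exists>d. relevant_dist tr d \<and> T \<subseteq> supp d)"

definition relevant_num :: "('s,'a) ptrans \<Rightarrow> real \<Rightarrow> bool" where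
  "relevant_num tr \<rho> \<longleftrightarrow> (\<exists>d T. relevant_dist tr d \<and> T \<noteq> {} \<and> T \<subseteq> supp d \<and> \<rho> = mass d T)"

datatype 's lstate = St 's | Dst "'s dist" | StSet "'s set"
datatype 'a lact = Act 'a | Num real | Hash

definition assoc_states :: "'s set \<Rightarrow> ('s,'a) ptrans \<Rightarrow> 's lstate set" where
  "assoc_states S tr = St ` S \<union> Dst ` {d. relevant_dist tr d} \<union> StSet ` {T. relevant_set tr T}"

definition assoc_acts :: "'a set \<Rightarrow> ('s,'a) ptrans \<Rightarrow> 'a lact set" where
  "assoc_acts Sig tr = Act ` Sig \<union> Num ` {\<rho>. relevant_num tr \<rho>} \<union> {Hash}"

definition assoc_trans :: "('s,'a) ptrans \<Rightarrow> ('s lstate \<times> 'a lact \<times> 's lstate) set" where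
  "assoc_trans tr =
     {(St s, Act a, Dst d) | s a d. (s,a,d) \<in> tr}
   \<union> {(Dst d, Num \<rho>, StSet T) | d \<rho> T. relevant_dist tr d \<and> relevant_num tr \<rho>
         \<and> T \<subseteq> supp d \<and> mass d T \<ge> \<rho>}
   \<union> {(StSet T, Hash, St s) | T s. relevant_set tr T \<and> s \<in> T}"

end

theory Submission
  imports Defs
begin

text \<open>Three steps of the associated LTS simulate one step of the pLTS: St s \<Rightarrow> Dst d
  replays a transition, Dst d \<Rightarrow> StSet T chooses a part of the support carrying at least a
  relevant mass, and StSet T \<Rightarrow> St s chooses an element of it. The middle step is the heart
  of the matter: for finitely supported distributions, agreeing on all classes of an
  equivalence R is the same as every nonempty subset of either support being matched by an
  R-similar subset of the other support of at least the same mass. An induction on n then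
  establishes the correspondences at the levels 3n, 3n+1 and 3n+2 together.\<close>

lemma mass_eq_sum:
  assumes "finite (supp d)" "\<And>x. 0 \<le> d x"
  shows "mass d A = (\<Sum>x\<in>A \<inter> supp d. real_of_rat (d x))"
proof -
  have "mass d A = infsum (\<lambda>x. real_of_rat (d x)) (A \<inter> supp d)"
    unfolding mass_def
  proof (rule infsum_cong_neutral)
    fix x assume "x \<in> A - A \<inter> supp d"
    then show "real_of_rat (d x) = 0"
      using assms(2)[of x] by (simp add: supp_def)
  qed auto
  then show ?thesis
    using assms(1) by simp
qed

lemma mass_inter_supp:
  assumes "finite (supp d)" "\<And>x. 0 \<le> d x"
  shows "mass d (A \<inter> supp d) = mass d A"
  using assms by (simp add: mass_eq_sum Int_assoc)

lemma mass_mono: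
  assumes "finite (supp d)" "\<And>x. 0 \<le> d x" "A \<subseteq> B"
  shows "mass d A \<le> mass d B"
  unfolding mass_eq_sum[OF assms(1,2)]
  by (rule sum_mono2) (use assms in \<open>auto simp: supp_def\<close>)

lemma mass_nonneg:
  assumes "finite (supp d)" "\<And>x. 0 \<le> d x"
  shows "0 \<le> mass d A"
  unfolding mass_eq_sum[OF assms] by (rule sum_nonneg) (use assms in auto)

lemma mass_pos_iff:
  assumes "finite (supp d)" "\<And>x. 0 \<le> d x"
  shows "0 < mass d A \<longleftrightarrow> A \<inter> supp d \<noteq> {}"
proof
  assume "0 < mass d A"
  then show "A \<inter> supp d \<noteq> {}"
    unfolding mass_eq_sum[OF assms] by auto
next
  assume "A \<inter> supp d \<noteq> {}"
  then obtain x where x: "x \<in> A \<inter> supp d" by blast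
  have "0 < real_of_rat (d x)"
    using x by (simp add: supp_def)
  also have "\<dots> \<le> mass d A"
    unfolding mass_eq_sum[OF assms]
    by (rule member_le_sum) (use x assms in auto)
  finally show "0 < mass d A" .
qed

lemma mass_Union_disjoint:
  assumes "finite (supp d)" "\<And>x. 0 \<le> d x" "finite C" "disjoint C"
  shows "mass d (\<Union>C) = (\<Sum>E\<in>C. mass d E)"
proof -
  have "mass d (\<Union>C) = (\<Sum>x\<in>(\<Union>E\<in>C. E \<inter> supp d). real_of_rat (d x))"
    unfolding mass_eq_sum[OF assms(1,2)] by (rule sum.cong) auto
  also have "\<dots> = (\<Sum>E\<in>C. \<Sum>x\<in>E \<inter> supp d. real_of_rat (d x))"
    by (rule sum.UNION_disjoint) (use assms in \<open>auto simp: pairwise_def disjnt_def\<close>)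
  also have "\<dots> = (\<Sum>E\<in>C. mass d E)"
    by (simp add: mass_eq_sum[OF assms(1,2)])
  finally show ?thesis .
qed

lemma set_similar_sym: "set_similar S R T1 T2 \<Longrightarrow> set_similar S R T2 T1"
  by (auto simp: set_similar_def)

lemma set_similar_iff:
  assumes R: "equiv S R" and "T1 \<subseteq> S" "T2 \<subseteq> S"
  shows "set_similar S R T1 T2 \<longleftrightarrow>
    (\<forall>s\<in>T1. \<exists>t\<in>T2. (s, t) \<in> R) \<and> (\<forall>t\<in>T2. \<exists>s\<in>T1. (s, t) \<in> R)"
proof
  assume sim: "set_similar S R T1 T2"
  have claim: "\<exists>y\<in>Y. (x, y) \<in> R"
    if "x \<in> X" "X \<subseteq> S" "set_similar S R X Y" for x X Y
  proof -
    have "x \<in> S" using that(1,2) by blast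
    then have "R``{x} \<in> S//R" "x \<in> R``{x}"
      using quotientI equiv_class_self[OF R] by auto
    with that(3) have "R``{x} \<inter> Y \<noteq> {}"
      using that(1) unfolding set_similar_def by blast
    then show ?thesis
      by blast
  qed
  have "sym R"
    using R by (simp add: equiv_def)
  then have "\<exists>s\<in>T1. (s, t) \<in> R" if "t \<in> T2" for t
    using claim[OF that assms(3) set_similar_sym[OF sim]] by (blast dest: symD)
  then show "(\<forall>s\<in>T1. \<exists>t\<in>T2. (s, t) \<in> R) \<and> (\<forall>t\<in>T2. \<exists>s\<in>T1. (s, t) \<in> R)"
    using claim[OF _ assms(2) sim] by blast
next
  assume match: "(\<forall>s\<in>T1. \<exists>t\<in>T2. (s, t) \<in> R) \<and> (\<forall>t\<in>T2. \<exists>s\<in>T1. (s, t) \<in> R)"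
  show "set_similar S R T1 T2"
    unfolding set_similar_def
  proof
    fix E assume "E \<in> S//R"
    moreover have "sym R"
      using R by (simp add: equiv_def)
    ultimately have "x \<in> E \<longleftrightarrow> y \<in> E" if "(x, y) \<in> R" for x y
      using that in_quotient_imp_closed[OF R] by (blast dest: symD)
    then show "(E \<inter> T1 \<noteq> {}) = (E \<inter> T2 \<noteq> {})"
      using match by blast
  qed
qed

lemma set_similar_nonempty:
  assumes "equiv S R" "T1 \<subseteq> S" "T1 \<noteq> {}" "set_similar S R T1 T2"
  shows "T2 \<noteq> {}"
proof -
  obtain s where s: "s \<in> T1" "s \<in> S" using assms(2,3) by blast
  then have "R``{s} \<in> S//R" "R``{s} \<inter> T1 \<noteq> {}"
    using quotientI[OF s(2)] equiv_class_self[OF assms(1) s(2)] s(1) by auto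
  then show ?thesis
    using assms(4) unfolding set_similar_def by auto
qed

definition mass_simulation :: "'s set \<Rightarrow> ('s \<times> 's) set \<Rightarrow> 's dist \<Rightarrow> 's dist \<Rightarrow> bool" where
  "mass_simulation S R d1 d2 \<longleftrightarrow> (\<forall>T1. T1 \<subseteq> supp d1 \<longrightarrow> T1 \<noteq> {} \<longrightarrow>
     (\<exists>T2. T2 \<subseteq> supp d2 \<and> mass d1 T1 \<le> mass d2 T2 \<and> set_similar S R T1 T2))"

lemma dist_equiv_sym: "dist_equiv S R d1 d2 \<Longrightarrow> dist_equiv S R d2 d1"
  by (simp add: dist_equiv_def)

lemma dist_equiv_mass_Union_classes:
  assumes R: "equiv S R" and eq: "dist_equiv S R d1 d2"
    and fin: "finite (supp d1)" "finite (supp d2)"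
    and nonneg: "\<And>x. 0 \<le> d1 x" "\<And>x. 0 \<le> d2 x"
    and C: "finite C" "C \<subseteq> S//R"
  shows "mass d1 (\<Union>C) = mass d2 (\<Union>C)"
proof -
  have "disjoint C"
    using quotient_disj[OF R] C(2) by (auto simp: pairwise_def disjnt_def)
  then show ?thesis
    using eq C unfolding dist_equiv_def
    by (simp add: mass_Union_disjoint[OF fin(1) nonneg(1) C(1)]
        mass_Union_disjoint[OF fin(2) nonneg(2) C(1)] subset_iff)
qed

lemma dist_equiv_class_meets_supp:
  assumes eq: "dist_equiv S R d1 d2"
    and fin: "finite (supp d1)" "finite (supp d2)"
    and nonneg: "\<And>x. 0 \<le> d1 x" "\<And>x. 0 \<le> d2 x"
    and E: "E \<in> S//R" "E \<inter> supp d1 \<noteq> {}"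
  shows "E \<inter> supp d2 \<noteq> {}"
proof -
  have "0 < mass d1 E"
    using E(2) mass_pos_iff[OF fin(1) nonneg(1)] by blast
  then have "0 < mass d2 E"
    using eq E(1) by (simp add: dist_equiv_def)
  then show ?thesis
    using mass_pos_iff[OF fin(2) nonneg(2)] by blast
qed

lemma set_similar_subset_class:
  assumes R: "equiv S R" and E: "E \<in> S//R"
    and similar: "set_similar S R T1 T2" and "T1 \<subseteq> E" "T2 \<subseteq> S"
  shows "T2 \<subseteq> E"
proof
  fix t assume t: "t \<in> T2"
  then have "t \<in> S" using assms(5) by blast
  then have cls: "R``{t} \<in> S//R" "t \<in> R``{t}"
    using quotientI equiv_class_self[OF R] by auto
  then have "R``{t} \<inter> T1 \<noteq> {}"
    using similar t unfolding set_similar_def by blast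
  then have "R``{t} = E"
    using quotient_disj[OF R cls(1) E] assms(4) by blast
  then show "t \<in> E"
    using cls(2) by simp
qed

text \<open>A subset T1 of supp d1 is matched by the part of supp d2 lying in the classes
  that meet T1: equivalence gives these classes equal masses under d1 and d2.\<close>
lemma dist_equiv_imp_mass_simulation:
  assumes R: "equiv S R" and eq: "dist_equiv S R d1 d2"
    and fin: "finite (supp d1)" "finite (supp d2)"
    and nonneg: "\<And>x. 0 \<le> d1 x" "\<And>x. 0 \<le> d2 x" and supp: "supp d1 \<subseteq> S"
  shows "mass_simulation S R d1 d2"
  unfolding mass_simulation_def
proof (intro allI impI)
  fix T1 assume T1: "T1 \<subseteq> supp d1"
  define C where "C = (\<lambda>s. R``{s}) ` T1"
  define T2 where "T2 = supp d2 \<inter> \<Union>C"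
  have T1S: "T1 \<subseteq> S" using T1 supp by blast
  have C: "finite C" "C \<subseteq> S//R"
    unfolding C_def using T1S finite_subset[OF T1 fin(1)] by (auto intro: quotientI)
  have "mass d1 T1 \<le> mass d1 (\<Union>C)"
    by (rule mass_mono[OF fin(1) nonneg(1)])
      (use T1S equiv_class_self[OF R] in \<open>auto simp: C_def\<close>)
  also have "\<dots> = mass d2 (\<Union>C)"
    by (rule dist_equiv_mass_Union_classes[OF R eq fin nonneg C])
  also have "\<dots> = mass d2 T2"
    unfolding T2_def using mass_inter_supp[OF fin(2) nonneg(2)] by (simp add: Int_commute)
  finally have heavier: "mass d1 T1 \<le> mass d2 T2" .
  have "\<exists>t\<in>T2. (s, t) \<in> R" if s: "s \<in> T1" for s
  proof -
    have s_mem: "s \<in> S" "s \<in> supp d1"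
      using s T1 T1S by blast+
    then have "R``{s} \<in> S//R" "R``{s} \<inter> supp d1 \<noteq> {}"
      using quotientI[OF s_mem(1)] equiv_class_self[OF R s_mem(1)] by auto
    then obtain t where "t \<in> R``{s} \<inter> supp d2"
      using dist_equiv_class_meets_supp[OF eq fin nonneg] by blast
    moreover have "R``{s} \<subseteq> \<Union>C"
      using s by (auto simp: C_def)
    ultimately show ?thesis
      unfolding T2_def by blast
  qed
  moreover have "\<exists>s\<in>T1. (s, t) \<in> R" if "t \<in> T2" for t
    using that by (auto simp: T2_def C_def)
  moreover have "T2 \<subseteq> S"
    using C(2) in_quotient_imp_subset[OF R] by (auto simp: T2_def)
  ultimately have "set_similar S R T1 T2"
    by (subst set_similar_iff[OF R T1S]) auto
  then show "\<exists>T2. T2 \<subseteq> supp d2 \<and> mass d1 T1 \<le> mass d2 T2 \<and> set_similar S R T1 T2"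
    using heavier by (auto simp: T2_def)
qed

text \<open>Apply the simulation to the trace E \<inter> supp d1 of the class E: the matching set
  lies inside E.\<close>
lemma mass_simulation_imp_mass_le:
  assumes R: "equiv S R" and sim: "mass_simulation S R d1 d2"
    and fin: "finite (supp d1)" "finite (supp d2)"
    and nonneg: "\<And>x. 0 \<le> d1 x" "\<And>x. 0 \<le> d2 x" and supp: "supp d2 \<subseteq> S"
    and E: "E \<in> S//R"
  shows "mass d1 E \<le> mass d2 E"
proof (cases "E \<inter> supp d1 = {}")
  case True
  then have "mass d1 E = 0"
    using mass_pos_iff[OF fin(1) nonneg(1), of E] mass_nonneg[OF fin(1) nonneg(1), of E] by simp
  then show ?thesis
    using mass_nonneg[OF fin(2) nonneg(2)] by simp
next
  case False
  have "E \<inter> supp d1 \<subseteq> supp d1" by blast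
  with False obtain T2 where T2: "T2 \<subseteq> supp d2" "mass d1 (E \<inter> supp d1) \<le> mass d2 T2"
      and similar: "set_similar S R (E \<inter> supp d1) T2"
    using sim unfolding mass_simulation_def by blast
  have "T2 \<subseteq> E"
    using set_similar_subset_class[OF R E similar] T2(1) supp by blast
  then have "mass d2 T2 \<le> mass d2 E"
    by (rule mass_mono[OF fin(2) nonneg(2)])
  with T2(2) show ?thesis
    by (simp add: mass_inter_supp[OF fin(1) nonneg(1)] Int_commute)
qed

lemma dist_equiv_iff_mass_simulation:
  assumes R: "equiv S R"
    and fin: "finite (supp d1)" "finite (supp d2)"
    and nonneg: "\<And>x. 0 \<le> d1 x" "\<And>x. 0 \<le> d2 x"
    and supp: "supp d1 \<subseteq> S" "supp d2 \<subseteq> S"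
  shows "dist_equiv S R d1 d2 \<longleftrightarrow> mass_simulation S R d1 d2 \<and> mass_simulation S R d2 d1"
proof
  assume "dist_equiv S R d1 d2"
  then show "mass_simulation S R d1 d2 \<and> mass_simulation S R d2 d1"
    using dist_equiv_imp_mass_simulation[OF R _ fin nonneg supp(1)]
      dist_equiv_imp_mass_simulation[OF R _ fin(2,1) nonneg(2,1) supp(2)] dist_equiv_sym
    by blast
next
  assume "mass_simulation S R d1 d2 \<and> mass_simulation S R d2 d1"
  then show "dist_equiv S R d1 d2"
    unfolding dist_equiv_def
    using mass_simulation_imp_mass_le[OF R _ fin nonneg supp(2)]
      mass_simulation_imp_mass_le[OF R _ fin(2,1) nonneg(2,1) supp(1)]
    by (simp add: order_antisym)
qed

definition step_simulated :: "('q \<times> 'b \<times> 'q) set \<Rightarrow> ('q \<times> 'q) set \<Rightarrow> 'q \<Rightarrow> 'q \<Rightarrow> bool" where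
  "step_simulated tr R p q \<longleftrightarrow> (\<forall>a p'. (p, a, p') \<in> tr \<longrightarrow> (\<exists>q'. (q, a, q') \<in> tr \<and> (p', q') \<in> R))"

definition pstep_simulated :: "'s set \<Rightarrow> ('s,'a) ptrans \<Rightarrow> ('s \<times> 's) set \<Rightarrow> 's \<Rightarrow> 's \<Rightarrow> bool" where
  "pstep_simulated S tr R s t \<longleftrightarrow>
     (\<forall>a d. (s, a, d) \<in> tr \<longrightarrow> (\<exists>d'. (t, a, d') \<in> tr \<and> dist_equiv S R d d'))"

lemma lapprox_subset: "lapprox Q tr n \<subseteq> Q \<times> Q"
  by (cases n) auto

lemma lapprox_swap: "(p, q) \<in> lapprox Q tr n \<Longrightarrow> (q, p) \<in> lapprox Q tr n"
proof (induction n arbitrary: p q)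
  case 0
  then show ?case by simp
next
  case (Suc n)
  from Suc.prems show ?case
    by simp (use Suc.IH in blast)
qed

lemma lapprox_Suc_iff:
  "(p, q) \<in> lapprox Q tr (Suc n) \<longleftrightarrow> p \<in> Q \<and> q \<in> Q \<and>
     step_simulated tr (lapprox Q tr n) p q \<and> step_simulated tr (lapprox Q tr n) q p"
proof -
  have "(q', p') \<in> lapprox Q tr n \<longleftrightarrow> (p', q') \<in> lapprox Q tr n" for p' q'
    using lapprox_swap[of _ _ Q tr n] by blast
  then show ?thesis
    unfolding step_simulated_def by simp
qed

lemma equiv_papprox: "equiv S (papprox S tr n)"
proof (cases n)
  case 0
  then show ?thesis by (auto simp: equiv_def refl_on_def sym_def trans_def)
next
  case (Suc m)
  let ?E = "dist_equiv S (papprox S tr m)"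
  have "?E d d" for d
    by (simp add: dist_equiv_def)
  moreover have "?E d2 d1 \<longleftrightarrow> ?E d1 d2" for d1 d2
    by (auto simp: dist_equiv_def)
  moreover have "?E d1 d3" if "?E d1 d2" "?E d2 d3" for d1 d2 d3
    using that by (simp add: dist_equiv_def)
  ultimately show ?thesis
    unfolding Suc equiv_def refl_on_def sym_def trans_def by auto metis+
qed

lemma papprox_Suc_iff:
  "(s, t) \<in> papprox S tr (Suc n) \<longleftrightarrow> s \<in> S \<and> t \<in> S \<and>
     pstep_simulated S tr (papprox S tr n) s t \<and> pstep_simulated S tr (papprox S tr n) t s"
proof -
  have "dist_equiv S R d' d \<longleftrightarrow> dist_equiv S R d d'" for R d d'
    by (auto simp: dist_equiv_def)
  then show ?thesis
    unfolding pstep_simulated_def by simp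
qed

lemma assoc_trans_St_iff:
  "(St s, a, q) \<in> assoc_trans tr \<longleftrightarrow> (\<exists>b d. a = Act b \<and> q = Dst d \<and> (s, b, d) \<in> tr)"
  by (auto simp: assoc_trans_def)

lemma assoc_trans_Dst_iff:
  "(Dst d, a, q) \<in> assoc_trans tr \<longleftrightarrow> (\<exists>\<rho> T. a = Num \<rho> \<and> q = StSet T \<and>
     relevant_dist tr d \<and> relevant_num tr \<rho> \<and> T \<subseteq> supp d \<and> \<rho> \<le> mass d T)"
  by (auto simp: assoc_trans_def)

lemma assoc_trans_StSet_iff:
  "(StSet T, a, q) \<in> assoc_trans tr \<longleftrightarrow> (\<exists>s. a = Hash \<and> q = St s \<and> relevant_set tr T \<and> s \<in> T)"
  by (auto simp: assoc_trans_def)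

lemma assoc_states_simps [simp]:
  "St s \<in> assoc_states S tr \<longleftrightarrow> s \<in> S"
  "Dst d \<in> assoc_states S tr \<longleftrightarrow> relevant_dist tr d"
  "StSet T \<in> assoc_states S tr \<longleftrightarrow> relevant_set tr T"
  by (auto simp: assoc_states_def)

lemma relevant_dist_target: "(s, a, d) \<in> tr \<Longrightarrow> relevant_dist tr d"
  by (auto simp: relevant_dist_def)

locale finitely_supported_pLTS =
  fixes S :: "'s set" and Sig :: "'a set" and tr :: "('s,'a) ptrans"
  assumes pLTS: "is_pLTS S Sig tr"
    and finite_supp: "\<And>d. relevant_dist tr d \<Longrightarrow> finite (supp d)"
begin

abbreviation approx :: "nat \<Rightarrow> ('s \<times> 's) set" where
  "approx \<equiv> papprox S tr"

abbreviation approx' :: "nat \<Rightarrow> ('s lstate \<times> 's lstate) set" where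
  "approx' \<equiv> lapprox (assoc_states S tr) (assoc_trans tr)"

lemma relevant_dist_nonneg: "relevant_dist tr d \<Longrightarrow> 0 \<le> d x"
  using pLTS by (auto simp: is_pLTS_def is_dist_def relevant_dist_def)

lemma relevant_dist_supp_subset: "relevant_dist tr d \<Longrightarrow> supp d \<subseteq> S"
  using pLTS by (fastforce simp: is_pLTS_def is_dist_def relevant_dist_def supp_def)

lemma relevant_set_subset: "relevant_set tr T \<Longrightarrow> T \<subseteq> S"
  using relevant_dist_supp_subset by (auto simp: relevant_set_def)

lemma relevant_num_pos: "relevant_num tr \<rho> \<Longrightarrow> 0 < \<rho>"
  using finite_supp relevant_dist_nonneg mass_pos_iff by (fastforce simp: relevant_num_def)

lemma St_step_simulated_iff:
  assumes IH: "\<And>d1 d2. relevant_dist tr d1 \<Longrightarrow> relevant_dist tr d2 \<Longrightarrow>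
      (Dst d1, Dst d2) \<in> approx' k \<longleftrightarrow> dist_equiv S (approx n) d1 d2"
  shows "step_simulated (assoc_trans tr) (approx' k) (St s) (St t) \<longleftrightarrow>
    pstep_simulated S tr (approx n) s t"
proof -
  have "step_simulated (assoc_trans tr) (approx' k) (St s) (St t) \<longleftrightarrow>
      (\<forall>a d. (s, a, d) \<in> tr \<longrightarrow> (\<exists>d'. (t, a, d') \<in> tr \<and> (Dst d, Dst d') \<in> approx' k))"
    unfolding step_simulated_def assoc_trans_St_iff by blast
  also have "\<dots> \<longleftrightarrow> pstep_simulated S tr (approx n) s t"
    unfolding pstep_simulated_def using IH relevant_dist_target by meson
  finally show ?thesis .
qed

lemma St_approx'_Suc_iff:
  assumes "\<And>d1 d2. relevant_dist tr d1 \<Longrightarrow> relevant_dist tr d2 \<Longrightarrow>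
      (Dst d1, Dst d2) \<in> approx' k \<longleftrightarrow> dist_equiv S (approx n) d1 d2"
  shows "(St s, St t) \<in> approx' (Suc k) \<longleftrightarrow> (s, t) \<in> approx (Suc n)"
  by (simp only: lapprox_Suc_iff papprox_Suc_iff St_step_simulated_iff[OF assms]
      assoc_states_simps)

lemma StSet_step_simulated_iff:
  assumes IH: "\<And>s t. (St s, St t) \<in> approx' m \<longleftrightarrow> (s, t) \<in> approx n"
    and T1: "relevant_set tr T1" and T2: "relevant_set tr T2"
  shows "step_simulated (assoc_trans tr) (approx' m) (StSet T1) (StSet T2) \<longleftrightarrow>
    (\<forall>s\<in>T1. \<exists>t\<in>T2. (s, t) \<in> approx n)"
proof -
  have "step_simulated (assoc_trans tr) (approx' m) (StSet T1) (StSet T2) \<longleftrightarrow>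
      (\<forall>s\<in>T1. \<exists>t\<in>T2. (St s, St t) \<in> approx' m)"
    using T1 T2 unfolding step_simulated_def assoc_trans_StSet_iff by (auto; blast)
  then show ?thesis
    by (simp only: IH)
qed

lemma StSet_approx'_Suc_iff:
  assumes IH: "\<And>s t. (St s, St t) \<in> approx' m \<longleftrightarrow> (s, t) \<in> approx n"
    and T1: "relevant_set tr T1" and T2: "relevant_set tr T2"
  shows "(StSet T1, StSet T2) \<in> approx' (Suc m) \<longleftrightarrow> set_similar S (approx n) T1 T2"
proof -
  have "(StSet T1, StSet T2) \<in> approx' (Suc m) \<longleftrightarrow>
      (\<forall>s\<in>T1. \<exists>t\<in>T2. (s, t) \<in> approx n) \<and> (\<forall>t\<in>T2. \<exists>s\<in>T1. (t, s) \<in> approx n)"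
    using T1 T2 by (simp only: lapprox_Suc_iff StSet_step_simulated_iff[OF IH] assoc_states_simps simp_thms)
  moreover have "(t, s) \<in> approx n \<longleftrightarrow> (s, t) \<in> approx n" for s t
    using equiv_papprox[of S tr n] by (auto simp: equiv_def dest: symD)
  ultimately show ?thesis
    by (simp add: set_similar_iff[OF equiv_papprox relevant_set_subset[OF T1] relevant_set_subset[OF T2]])
qed

lemma mass_simulation_if_Dst_step_simulated:
  assumes IH: "\<And>T1 T2. relevant_set tr T1 \<Longrightarrow> relevant_set tr T2 \<Longrightarrow>
      (StSet T1, StSet T2) \<in> approx' k \<Longrightarrow> set_similar S (approx n) T1 T2"
    and d1: "relevant_dist tr d1"
    and step: "step_simulated (assoc_trans tr) (approx' k) (Dst d1) (Dst d2)"
  shows "mass_simulation S (approx n) d1 d2"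
  unfolding mass_simulation_def
proof (intro allI impI)
  fix T1 assume T1: "T1 \<subseteq> supp d1" "T1 \<noteq> {}"
  then have "relevant_num tr (mass d1 T1)"
    using d1 unfolding relevant_num_def by blast
  then have "(Dst d1, Num (mass d1 T1), StSet T1) \<in> assoc_trans tr"
    using d1 T1 by (simp add: assoc_trans_Dst_iff)
  then obtain q where "(Dst d2, Num (mass d1 T1), q) \<in> assoc_trans tr"
      and related: "(StSet T1, q) \<in> approx' k"
    using step unfolding step_simulated_def by blast
  then obtain T2 where T2: "q = StSet T2" "T2 \<subseteq> supp d2" "mass d1 T1 \<le> mass d2 T2"
    by (auto simp: assoc_trans_Dst_iff)
  have "relevant_set tr T1"
    using T1 d1 by (auto simp: relevant_set_def)
  moreover have "relevant_set tr T2"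
    using lapprox_subset related T2(1) by fastforce
  ultimately show "\<exists>T2. T2 \<subseteq> supp d2 \<and> mass d1 T1 \<le> mass d2 T2 \<and> set_similar S (approx n) T1 T2"
    using IH related T2 by blast
qed

lemma Dst_step_simulated_if_mass_simulation:
  assumes IH: "\<And>T1 T2. relevant_set tr T1 \<Longrightarrow> relevant_set tr T2 \<Longrightarrow>
      set_similar S (approx n) T1 T2 \<Longrightarrow> (StSet T1, StSet T2) \<in> approx' k"
    and d1: "relevant_dist tr d1" and d2: "relevant_dist tr d2"
    and sim: "mass_simulation S (approx n) d1 d2"
  shows "step_simulated (assoc_trans tr) (approx' k) (Dst d1) (Dst d2)"
  unfolding step_simulated_def
proof (intro allI impI)
  fix a p assume "(Dst d1, a, p) \<in> assoc_trans tr"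
  then obtain \<rho> T1 where \<rho>: "a = Num \<rho>" "p = StSet T1" "relevant_num tr \<rho>"
      and T1: "T1 \<subseteq> supp d1" "\<rho> \<le> mass d1 T1"
    by (auto simp: assoc_trans_Dst_iff)
  have "T1 \<noteq> {}"
    using relevant_num_pos[OF \<rho>(3)] T1(2) by (auto simp: mass_def)
  then obtain T2 where T2: "T2 \<subseteq> supp d2" "mass d1 T1 \<le> mass d2 T2"
      and similar: "set_similar S (approx n) T1 T2"
    using sim T1(1) unfolding mass_simulation_def by blast
  have rel1: "relevant_set tr T1"
    using \<open>T1 \<noteq> {}\<close> T1(1) d1 by (auto simp: relevant_set_def)
  then have "T2 \<noteq> {}"
    using set_similar_nonempty[OF equiv_papprox relevant_set_subset] \<open>T1 \<noteq> {}\<close> similar by blast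
  then have rel2: "relevant_set tr T2"
    using T2(1) d2 by (auto simp: relevant_set_def)
  have "(Dst d2, a, StSet T2) \<in> assoc_trans tr"
    using \<rho> T1 T2 d2 by (auto simp: assoc_trans_Dst_iff)
  moreover have "(p, StSet T2) \<in> approx' k"
    using IH[OF rel1 rel2 similar] \<rho>(2) by simp
  ultimately show "\<exists>q. (Dst d2, a, q) \<in> assoc_trans tr \<and> (p, q) \<in> approx' k"
    by blast
qed

lemma Dst_step_simulated_iff:
  assumes IH: "\<And>T1 T2. relevant_set tr T1 \<Longrightarrow> relevant_set tr T2 \<Longrightarrow>
      (StSet T1, StSet T2) \<in> approx' k \<longleftrightarrow> set_similar S (approx n) T1 T2"
    and d1: "relevant_dist tr d1" and d2: "relevant_dist tr d2"
  shows "step_simulated (assoc_trans tr) (approx' k) (Dst d1) (Dst d2) \<longleftrightarrow>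
    mass_simulation S (approx n) d1 d2"
  using mass_simulation_if_Dst_step_simulated[OF IH[THEN iffD1] d1]
    Dst_step_simulated_if_mass_simulation[OF IH[THEN iffD2] d1 d2] by blast

lemma Dst_approx'_Suc_iff:
  assumes IH: "\<And>T1 T2. relevant_set tr T1 \<Longrightarrow> relevant_set tr T2 \<Longrightarrow>
      (StSet T1, StSet T2) \<in> approx' k \<longleftrightarrow> set_similar S (approx n) T1 T2"
    and d1: "relevant_dist tr d1" and d2: "relevant_dist tr d2"
  shows "(Dst d1, Dst d2) \<in> approx' (Suc k) \<longleftrightarrow> dist_equiv S (approx n) d1 d2"
  using d1 d2
  by (simp only: lapprox_Suc_iff assoc_states_simps simp_thms
      Dst_step_simulated_iff[OF IH d1 d2] Dst_step_simulated_iff[OF IH d2 d1]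
      dist_equiv_iff_mass_simulation[OF equiv_papprox finite_supp[OF d1] finite_supp[OF d2]
        relevant_dist_nonneg[OF d1] relevant_dist_nonneg[OF d2]
        relevant_dist_supp_subset[OF d1] relevant_dist_supp_subset[OF d2]])

lemma St_approx'_iff: "(St s, St t) \<in> approx' (3 * n) \<longleftrightarrow> (s, t) \<in> approx n"
proof (induction n arbitrary: s t)
  case 0
  then show ?case by simp
next
  case (Suc n)
  have "3 * Suc n = Suc (Suc (Suc (3 * n)))" by simp
  then show ?case
    by (simp only: St_approx'_Suc_iff Dst_approx'_Suc_iff StSet_approx'_Suc_iff Suc.IH)
qed

lemma StSet_approx'_iff:
  "relevant_set tr T1 \<Longrightarrow> relevant_set tr T2 \<Longrightarrow>
    (StSet T1, StSet T2) \<in> approx' (3 * n + 1) \<longleftrightarrow> set_similar S (approx n) T1 T2"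
  using StSet_approx'_Suc_iff[OF St_approx'_iff] by simp

lemma Dst_approx'_iff:
  "relevant_dist tr d1 \<Longrightarrow> relevant_dist tr d2 \<Longrightarrow>
    (Dst d1, Dst d2) \<in> approx' (3 * n + 2) \<longleftrightarrow> dist_equiv S (approx n) d1 d2"
  using Dst_approx'_Suc_iff[OF StSet_approx'_Suc_iff[OF St_approx'_iff]] by simp

end

theorem mainTheorem2:
  fixes S :: "'s set" and Sig :: "'a set" and tr :: "('s,'a) ptrans"
  assumes "is_pLTS S Sig tr"
    and "\<And>d. relevant_dist tr d \<Longrightarrow> finite (supp d)"
  shows "(\<forall>d1 d2. relevant_dist tr d1 \<longrightarrow> relevant_dist tr d2 \<longrightarrow>
            (dist_equiv S (papprox S tr n) d1 d2 \<longleftrightarrow>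
             (Dst d1, Dst d2) \<in> lapprox (assoc_states S tr) (assoc_trans tr) (3*n+2)))
       \<and> (\<forall>T1 T2. relevant_set tr T1 \<longrightarrow> relevant_set tr T2 \<longrightarrow>
            (set_similar S (papprox S tr n) T1 T2 \<longleftrightarrow>
             (StSet T1, StSet T2) \<in> lapprox (assoc_states S tr) (assoc_trans tr) (3*n+1)))"
proof -
  interpret finitely_supported_pLTS S Sig tr
    using assms by unfold_locales
  show ?thesis
    using Dst_approx'_iff StSet_approx'_iff by simp
qed

end
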